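(* The utilization-based dynamic posted-price (UDPP) mechanism is ex post incentive compatible for myopic bidders and dominant-strategy incentive compatible for myopic miners.
   Context: Dynamic posted-price setting: at each time step a block with $m$ slots is produced by an active miner; $n$ bidders with private values $v_i\ge 0$ submit bids $b_i$, each participating only once. Given the current posted price $q>0$, the eligible set is $M(q)=\{i:b_i\ge q\}$. A block is a set $B\subseteq M(q)$ with $|B|\le m$; each $i\in B$ receives a slot and pays $q$. The next price is $T(q,B)$. The UDPP mechanism uses the random maximal (RM) allocation rule — the miner selects $B$ uniformly at random among subsets of $M(q)$ of size $\min\{m,|M(q)|\}$ — and the update rule $T_U(q,B)=\alpha\frac{|B|}{m}(1+\delta)q+(1-\alpha)q$ with $\alpha\in(0,1)$, $\delta\in(0,\infty)$. A myopic bidder's utility is $v_i-q$ if included and $0$ otherwise (in expectation over allocation randomness); ex post IC for myopic bidders means that, when the miner follows the RM rule, bidding $b_i=v_i$ weakly dominates every other bid for every bidder, for all bids of the others. A myopic miner's utility is the total payment $q|B|$ in the current block; DSIC for myopic miners means following the RM rule is a weakly dominant, utility-maximizing strategy for the miner for all bids. *)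

theory Defs
  imports "HOL-Probability.Probability"
begin

text \<open>Bidders are indexed by 0..n-1; bids are a function nat => real (only indices < n matter).
  The current posted price is q > 0 and a block has m slots.\<close>

definition eligible :: "nat \<Rightarrow> real \<Rightarrow> (nat \<Rightarrow> real) \<Rightarrow> nat set" where
  "eligible n q b = {i. i < n \<and> q \<le> b i}"

definition feasible_blocks :: "nat \<Rightarrow> nat \<Rightarrow> real \<Rightarrow> (nat \<Rightarrow> real) \<Rightarrow> nat set set" where
  "feasible_blocks n m q b = {B. B \<subseteq> eligible n q b \<and> card B \<le> m}"

definition rm_alloc :: "nat \<Rightarrow> nat \<Rightarrow> real \<Rightarrow> (nat \<Rightarrow> real) \<Rightarrow> nat set pmf" where
  "rm_alloc n m q b = pmf_of_set
     {B. B \<subseteq> eligible n q b \<and> card B = min m (card (eligible n q b))}"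

definition udpp_update :: "real \<Rightarrow> real \<Rightarrow> nat \<Rightarrow> real \<Rightarrow> nat set \<Rightarrow> real" where
  "udpp_update \<alpha> \<delta> m q B = \<alpha> * (real (card B) / real m) * (1 + \<delta>) * q + (1 - \<alpha>) * q"

definition bidder_utility :: "nat \<Rightarrow> nat \<Rightarrow> real \<Rightarrow> (nat \<Rightarrow> real) \<Rightarrow> nat \<Rightarrow> real \<Rightarrow> real" where
  "bidder_utility n m q b i vi =
     measure_pmf.expectation (rm_alloc n m q b) (\<lambda>B. if i \<in> B then vi - q else 0)"

definition miner_utility :: "real \<Rightarrow> nat set \<Rightarrow> real" where
  "miner_utility q B = q * real (card B)"

definition ex_post_IC_myopic_bidders :: "nat \<Rightarrow> nat \<Rightarrow> real \<Rightarrow> bool" where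
  "ex_post_IC_myopic_bidders n m q \<longleftrightarrow>
     (\<forall>i<n. \<forall>vi\<ge>0. \<forall>b. \<forall>b'\<ge>0. (\<forall>j<n. 0 \<le> b j) \<longrightarrow>
        bidder_utility n m q (b(i := b')) i vi \<le> bidder_utility n m q (b(i := vi)) i vi)"

definition DSIC_myopic_miners :: "nat \<Rightarrow> nat \<Rightarrow> real \<Rightarrow> bool" where
  "DSIC_myopic_miners n m q \<longleftrightarrow>
     (\<forall>b. (\<forall>j<n. 0 \<le> b j) \<longrightarrow>
        set_pmf (rm_alloc n m q b) \<subseteq> feasible_blocks n m q b \<and>
        (\<forall>D. set_pmf D \<subseteq> feasible_blocks n m q b \<longrightarrow>
           measure_pmf.expectation D (miner_utility q)
             \<le> measure_pmf.expectation (rm_alloc n m q b) (miner_utility q)))"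

end

theory Submission
  imports Defs
begin

text \<open>Under the RM rule a bid matters only through whether the bidder is eligible, i.e. whether
  it is at least q. Bidding the true value makes the bidder eligible exactly when inclusion
  yields nonnegative utility v - q, so no other bid does better. For the miner, RM always
  produces a block of the largest feasible size min m |M(q)|, and the payment q |B| is
  monotone in the block size.\<close>

lemma finite_eligible: "finite (eligible n q b)"
  unfolding eligible_def by auto

lemma finite_feasible_blocks: "finite (feasible_blocks n m q b)"
  unfolding feasible_blocks_def
  by (rule finite_subset[of _ "Pow (eligible n q b)"]) (auto simp: finite_eligible)

lemma set_pmf_rm_alloc:
  "set_pmf (rm_alloc n m q b) = {B. B \<subseteq> eligible n q b \<and> card B = min m (card (eligible n q b))}"
proof -
  let ?E = "eligible n q b"
  let ?S = "{B. B \<subseteq> ?E \<and> card B = min m (card ?E)}"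
  have "finite ?S"
    by (rule finite_subset[of _ "Pow ?E"]) (auto simp: finite_eligible)
  moreover obtain B where "B \<subseteq> ?E" "card B = min m (card ?E)"
    using obtain_subset_with_card_n[of "min m (card ?E)" ?E] by auto
  then have "?S \<noteq> {}" by auto
  ultimately show ?thesis
    unfolding rm_alloc_def by simp
qed

lemma rm_alloc_feasible: "set_pmf (rm_alloc n m q b) \<subseteq> feasible_blocks n m q b"
  unfolding set_pmf_rm_alloc feasible_blocks_def by auto

lemma bidder_utility_cong_eligible:
  assumes "eligible n q b = eligible n q b'"
  shows "bidder_utility n m q b = bidder_utility n m q b'"
  unfolding bidder_utility_def rm_alloc_def assms ..

lemma bidder_utility_not_eligible:
  assumes "i \<notin> eligible n q b"
  shows "bidder_utility n m q b i v = 0"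
proof -
  have "bidder_utility n m q b i v = measure_pmf.expectation (rm_alloc n m q b) (\<lambda>B. 0::real)"
    unfolding bidder_utility_def
    by (rule integral_cong_AE) (use assms in \<open>auto simp: AE_measure_pmf_iff set_pmf_rm_alloc\<close>)
  then show ?thesis by simp
qed

lemma bidder_utility_nonneg:
  assumes "q \<le> v"
  shows "0 \<le> bidder_utility n m q b i v"
  unfolding bidder_utility_def
  by (rule integral_nonneg_AE) (use assms in \<open>auto simp: AE_measure_pmf_iff\<close>)

lemma bidder_utility_nonpos:
  assumes "v \<le> q"
  shows "bidder_utility n m q b i v \<le> 0"
proof -
  have "0 \<le> measure_pmf.expectation (rm_alloc n m q b) (\<lambda>B. - (if i \<in> B then v - q else 0))"
    by (rule integral_nonneg_AE) (use assms in \<open>auto simp: AE_measure_pmf_iff\<close>)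
  then show ?thesis
    unfolding bidder_utility_def by simp
qed

lemma truthful_bid_optimal:
  "bidder_utility n m q (b(i := b')) i v \<le> bidder_utility n m q (b(i := v)) i v"
proof (cases "q \<le> v")
  case True
  show ?thesis
  proof (cases "q \<le> b'")
    case True
    then have "eligible n q (b(i := b')) = eligible n q (b(i := v))"
      using \<open>q \<le> v\<close> unfolding eligible_def by auto
    then show ?thesis
      by (metis bidder_utility_cong_eligible order_refl)
  next
    case False
    then have "i \<notin> eligible n q (b(i := b'))"
      unfolding eligible_def by auto
    then show ?thesis
      using bidder_utility_nonneg[OF \<open>q \<le> v\<close>] by (simp add: bidder_utility_not_eligible)
  qed
next
  case False
  then have "i \<notin> eligible n q (b(i := v))"
    unfolding eligible_def by auto
  then show ?thesis
    using bidder_utility_nonpos[of v q] False by (simp add: bidder_utility_not_eligible)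
qed

theorem ex_post_IC_myopic_bidders_rm: "ex_post_IC_myopic_bidders n m q"
  unfolding ex_post_IC_myopic_bidders_def by (simp add: truthful_bid_optimal)

lemma miner_utility_feasible_le:
  assumes "0 \<le> q" and "B \<in> feasible_blocks n m q b"
  shows "miner_utility q B \<le> q * min m (card (eligible n q b))"
proof -
  from assms(2) have "B \<subseteq> eligible n q b" and "card B \<le> m"
    unfolding feasible_blocks_def by auto
  then have "card B \<le> min m (card (eligible n q b))"
    using card_mono[OF finite_eligible] by auto
  then show ?thesis
    unfolding miner_utility_def using assms(1) by (simp add: mult_left_mono)
qed

lemma expectation_miner_utility_rm_alloc:
  "measure_pmf.expectation (rm_alloc n m q b) (miner_utility q) = q * min m (card (eligible n q b))"
proof -
  have "measure_pmf.expectation (rm_alloc n m q b) (miner_utility q) =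
      measure_pmf.expectation (rm_alloc n m q b) (\<lambda>B. q * min m (card (eligible n q b)))"
    by (rule integral_cong_AE) (auto simp: AE_measure_pmf_iff set_pmf_rm_alloc miner_utility_def)
  then show ?thesis by simp
qed

lemma expectation_miner_utility_feasible_le:
  assumes "0 \<le> q" and "set_pmf D \<subseteq> feasible_blocks n m q b"
  shows "measure_pmf.expectation D (miner_utility q) \<le> q * min m (card (eligible n q b))"
proof (rule measure_pmf.integral_le_const)
  have "finite (set_pmf D)"
    using assms(2) finite_feasible_blocks finite_subset by blast
  then show "integrable (measure_pmf D) (miner_utility q)"
    by (rule integrable_measure_pmf_finite)
  show "AE B in measure_pmf D. miner_utility q B \<le> q * min m (card (eligible n q b))"
    using assms miner_utility_feasible_le by (auto simp: AE_measure_pmf_iff)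
qed

theorem DSIC_myopic_miners_rm:
  assumes "0 \<le> q"
  shows "DSIC_myopic_miners n m q"
  unfolding DSIC_myopic_miners_def
  using rm_alloc_feasible expectation_miner_utility_feasible_le[OF assms]
  by (simp add: expectation_miner_utility_rm_alloc)

text \<open>Myopic utilities do not depend on the next price.\<close>

theorem mainTheorem3:
  fixes n m :: nat and q \<alpha> \<delta> :: real
  assumes "m \<ge> 1" and "q > 0" and "0 < \<alpha>" and "\<alpha> < 1" and "\<delta> > 0"
  shows "ex_post_IC_myopic_bidders n m q \<and> DSIC_myopic_miners n m q"
  using ex_post_IC_myopic_bidders_rm DSIC_myopic_miners_rm \<open>q > 0\<close> by simp

end
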